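(* Let $f:\mathbb{R}^n\to\mathbb{R}$ be $r+1$ times continuously differentiable for some integer $r\ge1$, with $\nabla f$ Lipschitz continuous with constant $L$. Let $x^*$ satisfy $\nabla f(x^* )=0$, and write $\nabla^2 f(x^* )=\sum_{i=1}^n\lambda_i v_iv_i^T$ with $\{v_1,\dots,v_n\}$ orthonormal and \[ \lambda_1\ge\dots\ge\lambda_{n-p}\ge 0>\lambda_{n-p+1}\ge\dots\ge\lambda_n \] for some $1\le p<n$; suppose $\lambda_1>0$. Let $0<\alpha<4/\lambda_1$ and $\beta\in(\max(-1+\alpha\lambda_1/2,0),1)$, let \[ DG(x^*,x^* )=\begin{bmatrix}(1+\beta)I-\alpha\nabla^2 f(x^* ) & -\beta I\\ I & 0\end{bmatrix}\in\mathbb{R}^{2n\times 2n}, \] and let $E_{cs}\subseteq\mathbb{R}^{2n}$ be the invariant subspace of $DG(x^*,x^* )$ corresponding to its eigenvalues of magnitude less than or equal to $1$. Then for $w\in\mathbb{R}^n$, the vector $(w,w)\in\mathbb{R}^{2n}$ lies in $E_{cs}$ only if $w\in\operatorname{span}\{v_1,\dots,v_{n-p}\}$, i.e. the span of the eigenvectors of $\nabla^2 f(x^* )$ corresponding to its nonnegative eigenvalues.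
   Context: $DG(x^*,x^* )$ is the Jacobian at $(x^*,x^* )$ of the heavy-ball map $G(z_1,z_2)=(z_1-\alpha\nabla f(z_1)+\beta(z_1-z_2),\,z_1)$. $E_{cs}$ is the sum of the (generalized, real) eigenspaces of $DG(x^*,x^* )$ for eigenvalues of complex modulus at most $1$. *)

theory Defs
  imports "HOL-Analysis.Analysis"
begin

fun Ck :: "nat \<Rightarrow> (real^'n \<Rightarrow> real) \<Rightarrow> bool" where
  "Ck 0 g = continuous_on UNIV g"
| "Ck (Suc k) g = (\<exists>g'. (\<forall>x. (g has_derivative g' x) (at x)) \<and>
                        (\<forall>i. Ck k (\<lambda>x. g' x (axis i 1))))"

definition grad :: "(real^'n \<Rightarrow> real) \<Rightarrow> real^'n \<Rightarrow> real^'n" where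
  "grad f x = (\<chi> i. frechet_derivative f (at x) (axis i 1))"

definition hess :: "(real^'n \<Rightarrow> real) \<Rightarrow> real^'n \<Rightarrow> real^'n^'n" where
  "hess f x = (\<chi> i j. frechet_derivative (\<lambda>y. grad f y $ i) (at x) (axis j 1))"

definition outer :: "real^'n \<Rightarrow> real^'n \<Rightarrow> real^'n^'n" where
  "outer u v = (\<chi> a b. u $ a * v $ b)"

text \<open>Jacobian of the heavy-ball map at (x*,x*), on R^(n+n) indexed by 'n + 'n
  (Inl = first block, Inr = second block).\<close>
definition DG :: "real \<Rightarrow> real \<Rightarrow> real^'n^'n \<Rightarrow> real^('n + 'n)^('n + 'n)" where
  "DG \<alpha> \<beta> H = (\<chi> i j. case (i, j) of
      (Inl a, Inl b) \<Rightarrow> (1 + \<beta>) * (if a = b then 1 else 0) - \<alpha> * H $ a $ b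
    | (Inl a, Inr b) \<Rightarrow> - \<beta> * (if a = b then 1 else 0)
    | (Inr a, Inl b) \<Rightarrow> (if a = b then 1 else 0)
    | (Inr a, Inr b) \<Rightarrow> 0)"

definition dup :: "real^'n \<Rightarrow> real^('n + 'n)" where
  "dup w = (\<chi> i. case i of Inl a \<Rightarrow> w $ a | Inr a \<Rightarrow> w $ a)"

definition complexify_mat :: "real^'m^'m \<Rightarrow> complex^'m^'m" where
  "complexify_mat A = (\<chi> i j. complex_of_real (A $ i $ j))"

definition complexify_vec :: "real^'m \<Rightarrow> complex^'m" where
  "complexify_vec x = (\<chi> i. complex_of_real (x $ i))"

definition gen_eigenspace :: "complex^'m^'m \<Rightarrow> complex \<Rightarrow> (complex^'m) set" where
  "gen_eigenspace C \<mu> = {z. \<exists>k. ((\<lambda>y. C *v y - \<mu> *s y) ^^ k) z = 0}"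

text \<open>Center-stable subspace E_cs of a real matrix A: the real vectors lying in the sum of the
  generalized eigenspaces of A for eigenvalues of modulus \<le> 1 (this is the sum of the real
  generalized eigenspaces for those eigenvalues).\<close>
definition E_cs :: "real^'m^'m \<Rightarrow> (real^'m) set" where
  "E_cs A = {x. complexify_vec x \<in>
      span (\<Union>\<mu>\<in>{\<mu>. cmod \<mu> \<le> 1}. gen_eigenspace (complexify_mat A) \<mu>)}"

end

theory Submission
  imports Defs
begin

text \<open>If \<open>v\<close> is an eigenvector of the Hessian for \<open>\<lambda> < 0\<close>, then \<open>(\<mu> v, -\<beta> v)\<close> is a left
  eigenvector of \<open>DG\<close> whenever \<open>\<mu>\<^sup>2 = (1 + \<beta> - \<alpha>\<lambda>) \<mu> - \<beta>\<close>, and this quadratic has a root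
  \<open>\<mu> > 1\<close> because it is negative at 1. A left eigenvector for an eigenvalue \<open>\<mu>\<close> annihilates
  every generalized eigenspace for eigenvalues other than \<open>\<mu>\<close>, hence all of \<open>E_cs\<close> as
  \<open>\<mu> > 1\<close>. Pairing it with \<open>(w, w)\<close> gives \<open>(\<mu> - \<beta>) (v \<bullet> w) = 0\<close>, so \<open>w\<close> is orthogonal
  to every eigenvector for a negative eigenvalue.\<close>

text \<open>The bilinear pairing, without complex conjugation.\<close>

definition vdot :: "'a::semiring_1^'m \<Rightarrow> 'a^'m \<Rightarrow> 'a" where
  "vdot c z = (\<Sum>k\<in>UNIV. c $ k * z $ k)"

lemma vdot_matrix_vector_mult: "vdot c (C *v z) = vdot (c v* C) z"
  for c :: "'a::comm_semiring_1^'m"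
  unfolding vdot_def matrix_vector_mult_def vector_matrix_mult_def
  by (simp add: sum_distrib_left sum_distrib_right mult.assoc) (rule sum.swap)

lemma linear_vdot: "linear (vdot c)"
  for c :: "'a::real_algebra_1^'m"
  by (rule linearI) (simp_all add: vdot_def distrib_left sum.distrib scaleR_sum_right)

lemma vdot_complexify: "vdot (complexify_vec u) (complexify_vec x) = complex_of_real (u \<bullet> x)"
  by (simp add: vdot_def complexify_vec_def inner_vec_def)

lemma complexify_vector_matrix_mult:
  "complexify_vec u v* complexify_mat A = complexify_vec (u v* A)"
  by (simp add: complexify_vec_def complexify_mat_def vector_matrix_mult_def vec_eq_iff)

lemma complexify_scaleR: "complexify_vec (\<mu> *s u) = complex_of_real \<mu> *s complexify_vec u"
  by (simp add: complexify_vec_def vec_eq_iff)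


lemma left_eigenvector_vdot_gen_eigenspace:
  fixes C :: "complex^'m^'m"
  assumes left: "c v* C = \<nu> *s c" and ne: "m \<noteq> \<nu>"
    and z: "z \<in> gen_eigenspace C m"
  shows "vdot c z = 0"
proof -
  let ?N = "\<lambda>y. C *v y - m *s y"
  obtain k where k: "(?N ^^ k) z = 0"
    using z unfolding gen_eigenspace_def by blast
  have step: "vdot c (?N y) = (\<nu> - m) * vdot c y" for y
  proof -
    have "vdot c (?N y) = vdot c (C *v y) - m * vdot c y"
      by (simp add: vdot_def sum_subtractf sum_distrib_left algebra_simps)
    also have "vdot c (C *v y) = \<nu> * vdot c y"
      unfolding vdot_matrix_vector_mult left by (simp add: vdot_def sum_distrib_left mult.assoc)
    finally show ?thesis by (simp add: algebra_simps)
  qed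
  have "vdot c ((?N ^^ j) z) = (\<nu> - m) ^ j * vdot c z" for j
    by (induction j) (simp_all add: step)
  from this[of k] have "(\<nu> - m) ^ k * vdot c z = 0"
    by (simp add: k vdot_def)
  with ne show ?thesis by simp
qed

lemma left_eigenvector_orthogonal_E_cs:
  fixes A :: "real^'m^'m"
  assumes left: "u v* A = \<mu> *s u" and mu: "\<bar>\<mu>\<bar> > 1" and x: "x \<in> E_cs A"
  shows "u \<bullet> x = 0"
proof -
  let ?c = "complexify_vec u"
  have cleft: "?c v* complexify_mat A = complex_of_real \<mu> *s ?c"
    by (simp add: complexify_vector_matrix_mult left complexify_scaleR)
  have "span (\<Union>m\<in>{m. cmod m \<le> 1}. gen_eigenspace (complexify_mat A) m) \<subseteq> {z. vdot ?c z = 0}"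
  proof (rule span_minimal)
    show "subspace {z. vdot ?c z = 0}"
      by (rule linear_subspace_kernel[OF linear_vdot])
    have "m \<noteq> complex_of_real \<mu>" if "cmod m \<le> 1" for m
      using that mu by auto
    then show "(\<Union>m\<in>{m. cmod m \<le> 1}. gen_eigenspace (complexify_mat A) m) \<subseteq> {z. vdot ?c z = 0}"
      using left_eigenvector_vdot_gen_eigenspace[OF cleft] by blast
  qed
  with x have "vdot ?c (complexify_vec x) = 0"
    unfolding E_cs_def by blast
  then show ?thesis by (simp add: vdot_complexify)
qed

lemma sum_UNIV_Plus:
  fixes g :: "'a::finite + 'b::finite \<Rightarrow> 'c::comm_monoid_add"
  shows "sum g UNIV = (\<Sum>a\<in>UNIV. g (Inl a)) + (\<Sum>b\<in>UNIV. g (Inr b))"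
  using sum.Plus[of "UNIV :: 'a set" "UNIV :: 'b set" g] by simp

definition join_vec :: "'a^'m \<Rightarrow> 'a^'n \<Rightarrow> 'a^('m + 'n)" where
  "join_vec a b = (\<chi> k. case k of Inl i \<Rightarrow> a $ i | Inr i \<Rightarrow> b $ i)"

lemma join_vec_nth [simp]:
  "join_vec a b $ Inl i = a $ i" "join_vec a b $ Inr j = b $ j"
  by (simp_all add: join_vec_def)

lemma dup_eq_join_vec: "dup w = join_vec w w"
  by (simp add: dup_def join_vec_def)

lemma inner_join_vec: "join_vec a b \<bullet> join_vec c d = a \<bullet> c + b \<bullet> d"
  by (simp add: inner_vec_def sum_UNIV_Plus)

lemma join_vec_vector_matrix_mult_DG:
  "join_vec a b v* DG \<alpha> \<beta> H = join_vec ((1 + \<beta>) *s a - \<alpha> *s (a v* H) + b) (- \<beta> *s a)"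
proof -
  have "(join_vec a b v* DG \<alpha> \<beta> H) $ Inl j = (1 + \<beta>) * a $ j - \<alpha> * (a v* H) $ j + b $ j" for j
    by (simp add: vector_matrix_mult_def DG_def sum_UNIV_Plus algebra_simps sum_subtractf
        sum_distrib_left if_distrib[of "\<lambda>t. _ * t"] cong: if_cong)
  moreover have "(join_vec a b v* DG \<alpha> \<beta> H) $ Inr j = - \<beta> * a $ j" for j
    by (simp add: vector_matrix_mult_def DG_def sum_UNIV_Plus if_distrib[of "\<lambda>t. _ * t"] cong: if_cong)
  ultimately show ?thesis
    by (simp add: vec_eq_iff split_sum_all algebra_simps)
qed

lemma DG_left_eigenvector:
  assumes left: "x v* H = l *s x" and mu: "\<mu>\<^sup>2 = (1 + \<beta> - \<alpha> * l) * \<mu> - \<beta>"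
  shows "join_vec (\<mu> *s x) (- \<beta> *s x) v* DG \<alpha> \<beta> H = \<mu> *s join_vec (\<mu> *s x) (- \<beta> *s x)"
proof -
  have "(1 + \<beta>) *s (\<mu> *s x) - \<alpha> *s ((\<mu> *s x) v* H) + - \<beta> *s x = \<mu> *s (\<mu> *s x)"
  proof -
    have "(1 + \<beta>) * \<mu> * x $ i - \<alpha> * (\<mu> * l) * x $ i - \<beta> * x $ i
        = ((1 + \<beta> - \<alpha> * l) * \<mu> - \<beta>) * x $ i" for i
      by (simp add: algebra_simps)
    then show ?thesis
      by (simp add: scalar_vector_matrix_assoc left vec_eq_iff flip: mu power2_eq_square)
  qed
  then show ?thesis
    by (simp add: join_vec_vector_matrix_mult_DG vec_eq_iff split_sum_all)
qed

lemma quadratic_root_gt_one: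
  fixes s \<beta> :: real
  assumes "s > 1 + \<beta>" "\<beta> \<ge> 0"
  obtains \<mu> where "\<mu>\<^sup>2 = s * \<mu> - \<beta>" "\<mu> > 1"
proof -
  let ?q = "\<lambda>t. t\<^sup>2 - s * t + \<beta>"
  have "?q 1 < 0" "?q s \<ge> 0"
    using assms by (simp_all add: power2_eq_square)
  then obtain \<mu> where "1 \<le> \<mu>" "?q \<mu> = 0"
    using IVT[of ?q 1 0 s] assms by (auto intro!: continuous_intros)
  with \<open>?q 1 < 0\<close> have "\<mu> > 1"
    by (cases "\<mu> = 1") auto
  with \<open>?q \<mu> = 0\<close> show ?thesis
    by (intro that) auto
qed

lemma heavy_ball_E_cs_orthogonal:
  assumes left: "x v* H = l *s x" and l: "l < 0" and \<alpha>: "\<alpha> > 0" and \<beta>: "\<beta> \<ge> 0"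
    and w: "dup w \<in> E_cs (DG \<alpha> \<beta> H)"
  shows "x \<bullet> w = 0"
proof -
  have "1 + \<beta> - \<alpha> * l > 1 + \<beta>"
    using \<alpha> l by (simp add: mult_pos_neg)
  then obtain \<mu> where mu: "\<mu>\<^sup>2 = (1 + \<beta> - \<alpha> * l) * \<mu> - \<beta>" "\<mu> > 1"
    using quadratic_root_gt_one \<beta> by blast
  define u where "u = join_vec (\<mu> *s x) (- \<beta> *s x)"
  have "u v* DG \<alpha> \<beta> H = \<mu> *s u"
    unfolding u_def by (rule DG_left_eigenvector[OF left mu(1)])
  then have "u \<bullet> dup w = 0"
    using mu(2) w by (intro left_eigenvector_orthogonal_E_cs) auto
  moreover have "u \<bullet> dup w = (\<mu> - \<beta>) * (x \<bullet> w)"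
    by (simp add: u_def dup_eq_join_vec inner_join_vec scalar_mult_eq_scaleR algebra_simps)
  moreover have "\<mu> \<noteq> \<beta>"
  proof
    assume "\<mu> = \<beta>"
    with mu(1) have "\<alpha> * l * \<mu> = 0"
      by (simp add: power2_eq_square algebra_simps)
    with \<alpha> l mu(2) show False
      by simp
  qed
  ultimately show ?thesis
    by simp
qed

lemma vector_matrix_mult_sum_outer:
  "x v* (\<Sum>j\<in>I. c j *\<^sub>R outer (v j) (v j)) = (\<Sum>j\<in>I. (c j * (x \<bullet> v j)) *s v j)"
  by (simp add: vec_eq_iff vector_matrix_mult_def outer_def inner_vec_def sum_component
      sum_distrib_left sum_distrib_right mult_ac) (intro allI sum.swap)

lemma orthonormal_left_eigenvector_sum_outer:
  assumes orth: "\<forall>i\<in>I. \<forall>j\<in>I. v i \<bullet> v j = (if i = j then 1 else 0)" and i: "i \<in> I"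
    and "finite I"
  shows "v i v* (\<Sum>j\<in>I. c j *\<^sub>R outer (v j) (v j)) = c i *s v i"
proof -
  have "(\<Sum>j\<in>I. (c j * (v i \<bullet> v j)) *s v j) = (\<Sum>j\<in>I. if j = i then c i *s v i else 0)"
    using orth i by (intro sum.cong) auto
  with i \<open>finite I\<close> show ?thesis
    by (simp add: vector_matrix_mult_sum_outer)
qed

lemma orthonormal_span_complement:
  fixes v :: "'i \<Rightarrow> 'a::euclidean_space"
  assumes orth: "\<forall>i\<in>I. \<forall>j\<in>I. v i \<bullet> v j = (if i = j then 1 else 0)"
    and I: "finite I" "card I = DIM('a)"
    and w: "\<forall>k\<in>K. v k \<bullet> w = 0"
  shows "w \<in> span (v ` (I - K))"
proof -
  have "inj_on v I"
    using orth by (intro inj_onI) (metis zero_neq_one)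
  moreover have "independent (v ` I)"
    using orth by (intro pairwise_orthogonal_independent)
      (auto simp: pairwise_def orthogonal_def, metis inner_zero_left zero_neq_one)
  ultimately have "w \<in> span (v ` (I - K) \<union> v ` (I \<inter> K))"
    using I card_ge_dim_independent[of "v ` I" UNIV]
    by (auto simp: card_image Un_Diff_Int image_Un[symmetric])
  then obtain a b where ab: "w = a + b" "a \<in> span (v ` (I - K))" "b \<in> span (v ` (I \<inter> K))"
    unfolding span_Un by blast
  have "orthogonal (v k) a" if "k \<in> I \<inter> K" for k
    using that orth by (intro orthogonal_to_span[OF ab(2)]) (auto simp: orthogonal_def)
  with w ab(1) have "orthogonal (v k) b" if "k \<in> I \<inter> K" for k
    using that by (auto simp: orthogonal_def inner_add_right)
  then have "orthogonal b b"
    by (intro orthogonal_to_span[OF ab(3)]) (auto simp: orthogonal_commute)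
  with ab show ?thesis
    by (simp add: orthogonal_self)
qed

theorem theorem2p7:
  fixes f :: "real^'n \<Rightarrow> real" and r :: nat and L :: real and xs :: "real^'n"
    and lam :: "nat \<Rightarrow> real" and v :: "nat \<Rightarrow> real^'n" and p :: nat
    and \<alpha> \<beta> :: real and w :: "real^'n"
  assumes r: "r \<ge> 1"
    and smooth: "Ck (r + 1) f"
    and lip: "L-lipschitz_on UNIV (grad f)"
    and crit: "grad f xs = 0"
    and orth: "\<forall>i\<in>{1..CARD('n)}. \<forall>j\<in>{1..CARD('n)}. v i \<bullet> v j = (if i = j then 1 else 0)"
    and decomp: "hess f xs = (\<Sum>i=1..CARD('n). lam i *\<^sub>R outer (v i) (v i))"
    and p: "1 \<le> p" "p < CARD('n)"
    and sorted: "\<forall>i j. 1 \<le> i \<and> i \<le> j \<and> j \<le> CARD('n) \<longrightarrow> lam j \<le> lam i"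
    and nonneg: "lam (CARD('n) - p) \<ge> 0"
    and neg: "lam (CARD('n) - p + 1) < 0"
    and lam1: "lam 1 > 0"
    and alpha: "0 < \<alpha>" "\<alpha> < 4 / lam 1"
    and beta: "max (-1 + \<alpha> * lam 1 / 2) 0 < \<beta>" "\<beta> < 1"
    and inEcs: "dup w \<in> E_cs (DG \<alpha> \<beta> (hess f xs))"
  shows "w \<in> span (v ` {1..CARD('n) - p})"
proof -
  let ?N = "CARD('n)"
  have "v i \<bullet> w = 0" if i: "i \<in> {?N - p + 1..?N}" for i
  proof (rule heavy_ball_E_cs_orthogonal)
    show "v i v* hess f xs = lam i *s v i"
      unfolding decomp using orth i p by (intro orthonormal_left_eigenvector_sum_outer) auto
    show "lam i < 0"
      using sorted[rule_format, of "?N - p + 1" i] neg i by auto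
  qed (use alpha beta inEcs in auto)
  then have "w \<in> span (v ` ({1..?N} - {?N - p + 1..?N}))"
    using orth by (intro orthonormal_span_complement) auto
  moreover have "{1..?N} - {?N - p + 1..?N} = {1..?N - p}"
    using p by auto
  ultimately show ?thesis
    by simp
qed

end
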